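(* Let $n>(p+s)^4$ be an integer. For any $j \in \{1,2,\ldots,p-1\}$, the function $t\mapsto R_n(t+j/p)$ on $\mathbb{Z}_p$ belongs to $C^\dagger(\mathbb{Z}_p,\mathbb{Q}_p)$, and \[ v_p\left( \mathcal{L}_1\left( R_n\left( t+\frac{j}{p} \right) \right) \right) \geqslant (p+1+s)(n+1) + s \cdot v_p(n!) -M_0 - 3 - \left\lfloor \frac{\log (n+1)}{\log p} \right\rfloor. \]
   Context: Let $p\geqslant 5$ be a prime and $s$ a positive integer. Write $v_p$ for the $p$-adic valuation and $(\alpha)_k=\alpha(\alpha+1)\cdots(\alpha+k-1)$. Put $N_0=v_p(p-1+s)$ and $M_0=p^{2+N_0}s-1$. For an integer $n>(p+s)^4$ let \[R_n(t)=p^{pn}\, n!^s\, t^{M_0}\,\frac{\prod_{j=1}^{p-1}(t+\frac{j}{p})_n}{(t)_{n+1}^{p-1+s}}\in\mathbb{Q}(t).\] For $\rho>1$, $C^{\mathrm{an}}_\rho(\mathbb{Z}_p,\mathbb{Q}_p)$ is the set of functions $f(x)=\sum_{k\geqslant0}a_kx^k$ on $\mathbb{Z}_p$ with $a_k\in\mathbb{Q}_p$ and $|a_k|_p\rho^k\to0$, and $C^\dagger(\mathbb{Z}_p,\mathbb{Q}_p)=\bigcup_{\rho>1}C^{\mathrm{an}}_\rho(\mathbb{Z}_p,\mathbb{Q}_p)$. The first Bernoulli functional $\mathcal{L}_1:C^\dagger(\mathbb{Z}_p,\mathbb{Q}_p)\to\mathbb{Q}_p$ is $\mathcal{L}_1\left(\sum_{k\geqslant0}a_kt^k\right)=\sum_{k\geqslant0}a_k\frac{B_{k+1}}{k+1}$,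 where $B_m$ are the Bernoulli numbers ($\frac{t}{e^t-1}=\sum_m B_m\frac{t^m}{m!}$). *)

theory Defs
  imports "HOL-Analysis.Analysis" "HOL-Computational_Algebra.Computational_Algebra"
begin

text \<open>p-adic valuation of a nonzero rational number (value 0 is handled separately).\<close>
definition padic_val_rat :: "nat \<Rightarrow> rat \<Rightarrow> int" where
  "padic_val_rat p x =
     int (multiplicity (int p) (fst (quotient_of x))) - int (multiplicity (int p) (snd (quotient_of x)))"

definition padic_abs :: "nat \<Rightarrow> rat \<Rightarrow> real" where
  "padic_abs p x = (if x = 0 then 0 else real p powi (- padic_val_rat p x))"

definition bernoulli_num :: "nat \<Rightarrow> rat" where
  "bernoulli_num m = fact m * (fps_X / (fps_exp 1 - 1) :: rat fps) $ m"

definition N0 :: "nat \<Rightarrow> nat \<Rightarrow> nat" where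
  "N0 p s = multiplicity p (p - 1 + s)"

definition M0 :: "nat \<Rightarrow> nat \<Rightarrow> nat" where
  "M0 p s = p ^ (2 + N0 p s) * s - 1"

text \<open>R_n(t) = Rn_num / Rn_den as a quotient of polynomials in t over Q.\<close>
definition Rn_num :: "nat \<Rightarrow> nat \<Rightarrow> nat \<Rightarrow> rat poly" where
  "Rn_num p s n = smult (of_nat p ^ (p * n) * fact n ^ s)
      (monom 1 (M0 p s) * (\<Prod>j\<in>{1..p-1}. pochhammer [:of_nat j / of_nat p, 1:] n))"

definition Rn_den :: "nat \<Rightarrow> nat \<Rightarrow> nat \<Rightarrow> rat poly" where
  "Rn_den p s n = pochhammer [:0, 1:] (n + 1) ^ (p - 1 + s)"

text \<open>Taylor coefficients at t = 0 of the rational function t \<mapsto> R_n(t + j/p).\<close>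
definition Rn_shift_coeffs :: "nat \<Rightarrow> nat \<Rightarrow> nat \<Rightarrow> nat \<Rightarrow> nat \<Rightarrow> rat" where
  "Rn_shift_coeffs p s n j k =
     (fps_of_poly (Rn_num p s n \<circ>\<^sub>p [:of_nat j / of_nat p, 1:])
      / fps_of_poly (Rn_den p s n \<circ>\<^sub>p [:of_nat j / of_nat p, 1:])) $ k"

text \<open>A power series sum a_k x^k lies in C^an_rho for some rho > 1 (i.e. in C^dagger).\<close>
definition in_C_dagger :: "nat \<Rightarrow> (nat \<Rightarrow> rat) \<Rightarrow> bool" where
  "in_C_dagger p a \<longleftrightarrow> (\<exists>\<rho>::real. \<rho> > 1 \<and> (\<lambda>k. padic_abs p (a k) * \<rho> ^ k) \<longlonglongrightarrow> 0)"

text \<open>Partial sums of L_1(sum a_k t^k) = sum a_k B_{k+1}/(k+1).\<close>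
definition L1_partial :: "(nat \<Rightarrow> rat) \<Rightarrow> nat \<Rightarrow> rat" where
  "L1_partial a N = (\<Sum>k<N. a k * bernoulli_num (k + 1) / of_nat (k + 1))"

text \<open>v_p(lim S_N) \<ge> c for a p-adically convergent sequence of rationals S_N:
  equivalent to v_p(S_N) \<ge> c for all sufficiently large N (with v_p(0) = \<infinity>).\<close>
definition padic_lim_val_ge :: "nat \<Rightarrow> (nat \<Rightarrow> rat) \<Rightarrow> int \<Rightarrow> bool" where
  "padic_lim_val_ge p S c \<longleftrightarrow> (\<exists>N0. \<forall>N\<ge>N0. S N = 0 \<or> padic_val_rat p (S N) \<ge> c)"

end

theory Submission
  imports Defs
begin

(* Write c = j/p. As a power series in t, R_n(t + c) is the constant p^(pn) n!^s times (t + c)^M_0,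
   times the linear factors t + c + j'/p + i (0 < j' < p, i < n), times the inverses of the
   factors t + c + m (m <= n), each to the power p - 1 + s. Each factor has k-th Taylor coefficient
   of valuation at least a + r k, both for slope r = 0 and for r = 1; for r = 0 the n factors with
   j' = p - j, namely t + 1 + i, do better than the others because they have integral coefficients.
   Multiplying out gives v_p(a_k) >= G + max(0, k - n) for G = (p+1+s)(n+1) + s v_p(n!) - M_0 - 2.
   The slope-1 bound makes |a_k|_p rho^k tend to 0 for every rho < p. On the other hand p B_m is
   p-integral (by induction from Faulhaber's formula), and v_p(k + 1) <= L + (k - n) for
   L = floor(log_p (n + 1)), so every term a_k B_(k+1)/(k+1) of L_1, hence every partial sum, has
   valuation at least G - 1 - L. *)

section \<open>Bernoulli numbers and sums of powers\<close>

definition bernoulli_fps :: "rat fps" where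
  "bernoulli_fps = fps_X / (fps_exp 1 - 1)"

lemma bernoulli_num_eq_fps_nth: "bernoulli_num m = fact m * bernoulli_fps $ m"
  unfolding bernoulli_num_def bernoulli_fps_def ..

lemma fps_exp_minus_one_nonzero: "(fps_exp 1 - 1 :: rat fps) \<noteq> 0"
proof
  assume "(fps_exp 1 - 1 :: rat fps) = 0"
  then have "(fps_exp 1 - 1 :: rat fps) $ 1 = 0" by simp
  then show False by simp
qed

lemma bernoulli_fps_mult_exp_minus_one: "bernoulli_fps * (fps_exp 1 - 1) = fps_X"
proof -
  have "subdegree (fps_exp 1 - 1 :: rat fps) = 1"
    by (rule subdegreeI) auto
  then have "(fps_exp 1 - 1 :: rat fps) dvd fps_X"
    using fps_dvd_iff[OF fps_exp_minus_one_nonzero, of fps_X] by simp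
  then show ?thesis unfolding bernoulli_fps_def by (rule dvd_div_mult_self)
qed

lemma fps_exp_minus_one_mult_sum:
  "(fps_exp 1 - 1 :: rat fps) * (\<Sum>a<N. fps_exp (of_nat a)) = fps_exp (of_nat N) - 1"
proof (induction N)
  case (Suc N)
  have "fps_exp (of_nat (Suc N)) = (fps_exp 1 :: rat fps) * fps_exp (of_nat N)"
    by (simp add: fps_exp_add_mult[symmetric] add.commute)
  with Suc show ?case by (simp add: algebra_simps)
qed simp

lemma fps_X_mult_sum_exp:
  "fps_X * (\<Sum>a<N. fps_exp (of_nat a)) = bernoulli_fps * (fps_exp (of_nat N) - 1 :: rat fps)"
proof -
  let ?E = "\<lambda>c. fps_exp c - 1 :: rat fps"
  have "?E 1 * (fps_X * (\<Sum>a<N. fps_exp (of_nat a))) = fps_X * (?E 1 * (\<Sum>a<N. fps_exp (of_nat a)))"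
    by (simp only: mult_ac)
  also have "\<dots> = bernoulli_fps * ?E 1 * ?E (of_nat N)"
    by (simp only: fps_exp_minus_one_mult_sum bernoulli_fps_mult_exp_minus_one)
  also have "\<dots> = ?E 1 * (bernoulli_fps * ?E (of_nat N))"
    by (simp only: mult_ac)
  finally show ?thesis
    using fps_exp_minus_one_nonzero by simp
qed

lemma sum_powers_bernoulli:
  "(\<Sum>a<N. of_nat a ^ m :: rat) =
     (\<Sum>i\<le>m. of_nat (m choose i) * bernoulli_num i * of_nat N ^ (m + 1 - i) / of_nat (m + 1 - i))"
proof -
  have "(\<Sum>a<N. of_nat a ^ m :: rat) / fact m = (fps_X * (\<Sum>a<N. fps_exp (of_nat a))) $ Suc m"
    by (simp add: fps_sum_nth sum_divide_distrib)
  also have "\<dots> = (bernoulli_fps * (fps_exp (of_nat N) - 1)) $ Suc m"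
    by (simp only: fps_X_mult_sum_exp)
  also have "\<dots> = (\<Sum>i\<le>m. bernoulli_fps $ i * (of_nat N ^ (m + 1 - i) / fact (m + 1 - i)))"
    by (simp add: fps_mult_nth atLeast0AtMost Suc_diff_le)
  finally have "(\<Sum>a<N. of_nat a ^ m :: rat)
      = (\<Sum>i\<le>m. fact m * (bernoulli_fps $ i * (of_nat N ^ (m + 1 - i) / fact (m + 1 - i))))"
    by (simp add: sum_distrib_left field_simps)
  also have "\<dots> = (\<Sum>i\<le>m. of_nat (m choose i) * bernoulli_num i * of_nat N ^ (m + 1 - i) / of_nat (m + 1 - i))"
  proof (intro sum.cong refl)
    fix i assume "i \<in> {..m}"
    then have fm: "(fact m :: rat) = of_nat (m choose i) * fact i * fact (m - i)"
      and f: "(fact (m + 1 - i) :: rat) = of_nat (m + 1 - i) * fact (m - i)"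
      by (simp_all add: Suc_diff_le binomial_fact)
    show "fact m * (bernoulli_fps $ i * (of_nat N ^ (m + 1 - i) / fact (m + 1 - i)))
        = of_nat (m choose i) * bernoulli_num i * of_nat N ^ (m + 1 - i) / of_nat (m + 1 - i)"
      unfolding fm f bernoulli_num_eq_fps_nth by simp
  qed
  finally show ?thesis .
qed

lemma bernoulli_recurrence:
  "of_nat N * bernoulli_num m = (\<Sum>a<N. of_nat a ^ m)
     - (\<Sum>i<m. of_nat (m choose i) * (of_nat N * bernoulli_num i) * (of_nat N ^ (m - i) / of_nat (m - i + 1)))"
proof -
  define T where "T i = of_nat (m choose i) * bernoulli_num i * of_nat N ^ (m + 1 - i) / of_nat (m + 1 - i)"
    for i
  have T: "T i = of_nat (m choose i) * (of_nat N * bernoulli_num i) * (of_nat N ^ (m - i) / of_nat (m - i + 1))"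
    if "i \<le> m" for i
  proof -
    have "m + 1 - i = Suc (m - i)" using that by simp
    then show ?thesis unfolding T_def by (simp only: power_Suc) (simp add: field_simps)
  qed
  have "(\<Sum>a<N. of_nat a ^ m) = (\<Sum>i<Suc m. T i)"
    unfolding sum_powers_bernoulli lessThan_Suc_atMost T_def ..
  also have "\<dots> = (\<Sum>i<m. T i) + of_nat N * bernoulli_num m"
    by (simp add: T_def)
  also have "(\<Sum>i<m. T i) = (\<Sum>i<m. of_nat (m choose i) * (of_nat N * bernoulli_num i)
      * (of_nat N ^ (m - i) / of_nat (m - i + 1)))"
    by (intro sum.cong refl) (simp add: T)
  finally show ?thesis by simp
qed

section \<open>p-adic valuations\<close>

lemma multiplicity_Suc_le:
  fixes p :: nat
  assumes "p \<ge> 2" "n + 1 < p ^ (L + 1)"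
  shows "multiplicity p (k + 1) \<le> L + (k - n)"
proof -
  have "A + d \<le> A * p ^ d" if "A \<ge> 1" for A d :: nat
  proof (induction d)
    case (Suc d)
    have "A * p ^ d \<ge> 1" using that assms(1) by simp
    moreover have "A * p ^ d * 2 \<le> A * p ^ d * p" using assms(1) by (rule mult_le_mono2)
    moreover have "A * p ^ Suc d = A * p ^ d * p" by simp
    ultimately show ?case using Suc.IH by linarith
  qed simp
  from this[of "p ^ (L + 1)" "k - n"] have "k + 1 < p ^ (L + 1 + (k - n))"
    using assms by (simp add: power_add)
  then have "\<not> p ^ (L + 1 + (k - n)) dvd k + 1"
    by (auto dest: dvd_imp_le)
  then have "multiplicity p (k + 1) < L + 1 + (k - n)"
    by (rule multiplicity_lessI[rotated 2]) (use assms(1) in auto)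
  then show ?thesis by simp
qed

lemma floor_log_Suc_bound:
  fixes p n :: nat
  assumes "p \<ge> 2"
  obtains L :: nat where "\<lfloor>log (real p) (real (n + 1))\<rfloor> = int L" "n + 1 < p ^ (L + 1)"
proof -
  have "log (real p) (real (n + 1)) \<ge> 0" using assms by simp
  then obtain L :: nat where L: "\<lfloor>log (real p) (real (n + 1))\<rfloor> = int L"
    by (metis nonneg_int_cases zero_le_floor)
  with assms have "n + 1 < p ^ (L + 1)"
    using floor_log_nat_eq_powr_iff[of p "n + 1" L] by simp
  with L that show ?thesis by blast
qed

(* x lies in p^c Z_(p), i.e. x = 0 or c <= v_p(x) (see padic_val_rat_ge); unlike the valuation,
   this is closed under the ring operations without case distinctions on zero. *)
definition padic_val_ge :: "nat \<Rightarrow> rat \<Rightarrow> int \<Rightarrow> bool" where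
  "padic_val_ge p x c \<longleftrightarrow>
     (\<exists>a b::int. b > 0 \<and> \<not> int p dvd b \<and> x = of_int a / of_int b * of_nat p powi c)"

context
  fixes p :: nat
  assumes prime: "prime p"
begin

lemma padic_val_ge_of_int: "padic_val_ge p (of_int a) 0"
  unfolding padic_val_ge_def using prime
  by (intro exI[of _ a] exI[of _ 1]) (auto simp: prime_nat_iff)

lemma padic_val_ge_of_nat: "padic_val_ge p (of_nat a) 0"
  using padic_val_ge_of_int[of "int a"] by simp

lemma padic_val_ge_0: "padic_val_ge p 0 c"
  unfolding padic_val_ge_def using prime
  by (intro exI[of _ 0] exI[of _ 1]) (auto simp: prime_nat_iff)

lemma padic_val_ge_p_powi: "padic_val_ge p (of_nat p powi c) c"
  unfolding padic_val_ge_def using prime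
  by (intro exI[of _ 1] exI[of _ 1]) (auto simp: prime_nat_iff)

lemma padic_val_ge_p_power: "padic_val_ge p (of_nat p ^ k) (int k)"
  using padic_val_ge_p_powi[of "int k"] by simp

lemma padic_val_ge_inverse_coprime:
  assumes "\<not> int p dvd u"
  shows "padic_val_ge p (1 / of_int u) 0"
proof (cases "u > 0")
  case True
  then show ?thesis using assms unfolding padic_val_ge_def
    by (intro exI[of _ 1] exI[of _ u]) auto
next
  case False
  with assms have "u < 0" by (cases "u = 0") auto
  then show ?thesis using assms unfolding padic_val_ge_def
    by (intro exI[of _ "-1"] exI[of _ "-u"]) auto
qed

lemma padic_val_ge_mono:
  assumes "padic_val_ge p x c" "c' \<le> c"
  shows "padic_val_ge p x c'"
proof -
  obtain a b where ab: "b > 0" "\<not> int p dvd b" "x = of_int a / of_int b * of_nat p powi c"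
    using assms(1) unfolding padic_val_ge_def by blast
  have "(of_nat p :: rat) \<noteq> 0" using prime by (simp add: prime_gt_0_nat)
  then have "(of_nat p :: rat) powi c = of_nat p powi (c - c') * of_nat p powi c'"
    by (simp add: power_int_add[symmetric])
  also have "(of_nat p :: rat) powi (c - c') = of_int (int p ^ nat (c - c'))"
    using assms(2) by (simp add: power_int_def)
  finally have "x = of_int (a * int p ^ nat (c - c')) / of_int b * of_nat p powi c'"
    using ab(3) by simp
  with ab(1,2) show ?thesis unfolding padic_val_ge_def by blast
qed

lemma padic_val_ge_mult:
  assumes "padic_val_ge p x c" "padic_val_ge p y d"
  shows "padic_val_ge p (x * y) (c + d)"
proof -
  obtain a b where ab: "b > 0" "\<not> int p dvd b" "x = of_int a / of_int b * of_nat p powi c"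
    using assms(1) unfolding padic_val_ge_def by blast
  obtain a' b' where ab': "b' > 0" "\<not> int p dvd b'" "y = of_int a' / of_int b' * of_nat p powi d"
    using assms(2) unfolding padic_val_ge_def by blast
  have "\<not> int p dvd b * b'"
    using prime ab(2) ab'(2) by (simp add: prime_dvd_mult_iff)
  moreover have "x * y = of_int (a * a') / of_int (b * b') * of_nat p powi (c + d)"
    using ab(3) ab'(3) prime by (simp add: power_int_add prime_gt_0_nat)
  ultimately show ?thesis
    using ab(1) ab'(1) unfolding padic_val_ge_def by (metis mult_pos_pos)
qed

lemma padic_val_ge_add:
  assumes "padic_val_ge p x c" "padic_val_ge p y c"
  shows "padic_val_ge p (x + y) c"
proof -
  obtain a b where ab: "b > 0" "\<not> int p dvd b" "x = of_int a / of_int b * of_nat p powi c"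
    using assms(1) unfolding padic_val_ge_def by blast
  obtain a' b' where ab': "b' > 0" "\<not> int p dvd b'" "y = of_int a' / of_int b' * of_nat p powi c"
    using assms(2) unfolding padic_val_ge_def by blast
  have "\<not> int p dvd b * b'"
    using prime ab(2) ab'(2) by (simp add: prime_dvd_mult_iff)
  moreover have "x + y = of_int (a * b' + a' * b) / of_int (b * b') * of_nat p powi c"
    using ab(1,3) ab'(1,3) by (simp add: field_simps)
  ultimately show ?thesis
    using ab(1) ab'(1) unfolding padic_val_ge_def by (metis mult_pos_pos)
qed

lemma padic_val_ge_uminus: "padic_val_ge p x c \<Longrightarrow> padic_val_ge p (- x) c"
  unfolding padic_val_ge_def by (metis minus_divide_left minus_mult_left of_int_minus)

lemma padic_val_ge_diff:
  "padic_val_ge p x c \<Longrightarrow> padic_val_ge p y c \<Longrightarrow> padic_val_ge p (x - y) c"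
  using padic_val_ge_add[of x c "- y"] padic_val_ge_uminus[of y c] by simp

lemma padic_val_ge_sum:
  "(\<And>i. i \<in> A \<Longrightarrow> padic_val_ge p (f i) c) \<Longrightarrow> padic_val_ge p (\<Sum>i\<in>A. f i) c"
  by (induction A rule: infinite_finite_induct) (simp_all add: padic_val_ge_0 padic_val_ge_add)

lemma padic_val_ge_prod:
  "finite A \<Longrightarrow> (\<And>i. i \<in> A \<Longrightarrow> padic_val_ge p (f i) (c i)) \<Longrightarrow>
     padic_val_ge p (\<Prod>i\<in>A. f i) (\<Sum>i\<in>A. c i)"
  by (induction A rule: finite_induct)
     (use padic_val_ge_of_nat[of 1] in \<open>simp_all add: padic_val_ge_mult\<close>)

lemma padic_val_ge_power:
  "padic_val_ge p x c \<Longrightarrow> padic_val_ge p (x ^ k) (int k * c)"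
  using padic_val_ge_prod[of "{..<k}" "\<lambda>_. x" "\<lambda>_. c"] by simp

lemma padic_val_ge_of_nat_multiplicity:
  "padic_val_ge p (of_nat u) (int (multiplicity p u))"
proof (cases "u = 0")
  case False
  obtain w where "u = p ^ multiplicity p u * w"
    using multiplicity_decompose'[OF False] prime not_prime_unit by blast
  then have "(of_nat u :: rat) = of_nat p ^ multiplicity p u * of_nat w"
    by (metis of_nat_mult of_nat_power)
  then show ?thesis
    using padic_val_ge_mult[OF padic_val_ge_p_power padic_val_ge_of_nat] by simp
qed (simp add: padic_val_ge_0)

lemma padic_val_ge_inverse_of_nat:
  assumes "u > 0"
  shows "padic_val_ge p (1 / of_nat u) (- int (multiplicity p u))"
proof -
  have "u \<noteq> 0" "\<not> is_unit p" using assms prime not_prime_unit by auto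
  then obtain w where w: "u = p ^ multiplicity p u * w" "\<not> p dvd w"
    by (rule multiplicity_decompose')
  then have "(of_nat u :: rat) = of_nat w * of_nat p ^ multiplicity p u"
    by (metis mult.commute of_nat_mult of_nat_power)
  then have "(1 / of_nat u :: rat) = 1 / of_int (int w) * of_nat p powi (- int (multiplicity p u))"
    by (simp add: power_int_minus divide_inverse)
  moreover have "padic_val_ge p (1 / of_int (int w)) 0"
    using w(2) by (intro padic_val_ge_inverse_coprime) simp
  ultimately show ?thesis
    using padic_val_ge_mult[OF _ padic_val_ge_p_powi] by fastforce
qed

lemma padic_val_rat_ge:
  assumes "padic_val_ge p x c" "x \<noteq> 0"
  shows "c \<le> padic_val_rat p x"
proof -
  obtain a b where ab: "b > 0" "\<not> int p dvd b" "x = of_int a / of_int b * of_nat p powi c"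
    using assms(1) unfolding padic_val_ge_def by blast
  obtain u w where uw: "quotient_of x = (u, w)" by (cases "quotient_of x")
  have w0: "w > 0" using uw quotient_of_denom_pos by blast
  have x: "x = of_int u / of_int w" using quotient_of_div[OF uw] .
  have nz: "a \<noteq> 0" "u \<noteq> 0" using ab(3) x assms(2) by auto
  have pr: "prime (int p)" using prime by simp
  have mb: "multiplicity (int p) b = 0"
    using ab(2) by (simp add: not_dvd_imp_multiplicity_0)
  have val: "padic_val_rat p x = int (multiplicity (int p) u) - int (multiplicity (int p) w)"
    unfolding padic_val_rat_def uw by simp
  have pp: "(of_nat p :: rat) > 0" using prime by (simp add: prime_gt_0_nat)
  define k1 k2 where "k1 = nat (- c)" and "k2 = nat c"
  have powi: "(of_nat p :: rat) powi c = of_nat p ^ k2 / of_nat p ^ k1"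
    by (cases "c \<ge> 0") (simp_all add: k1_def k2_def power_int_def divide_inverse power_inverse)
  have eq: "u * b * int p ^ k1 = a * w * int p ^ k2"
  proof -
    have "(of_int (u * b * int p ^ k1) :: rat) = of_int (a * w * int p ^ k2)"
      using ab(1,3) x w0 pp unfolding powi by (simp add: field_simps)
    then show ?thesis by (simp only: of_int_eq_iff)
  qed
  have "multiplicity (int p) (u * b * int p ^ k1) = multiplicity (int p) (a * w * int p ^ k2)"
    by (simp only: eq)
  then have "multiplicity (int p) u + k1 = multiplicity (int p) a + multiplicity (int p) w + k2"
    using pr nz ab(1) w0 mb by (simp add: prime_elem_multiplicity_mult_distrib)
  then show ?thesis using val by (simp add: k1_def k2_def)
qed

lemma padic_abs_le:
  assumes "padic_val_ge p x c"
  shows "padic_abs p x \<le> real p powi (- c)"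
proof (cases "x = 0")
  case False
  have "real p \<ge> 1" using prime_gt_0_nat[OF prime] by simp
  then show ?thesis
    unfolding padic_abs_def using False padic_val_rat_ge[OF assms False]
    by (simp add: power_int_increasing)
qed (use prime in \<open>simp add: padic_abs_def prime_gt_0_nat\<close>)

lemma padic_val_ge_p_power_div_Suc: "padic_val_ge p (of_nat p ^ k / of_nat (k + 1)) 0"
proof -
  have "padic_val_ge p (of_nat p ^ k * (1 / of_nat (k + 1))) (int k - int (multiplicity p (k + 1)))"
    using padic_val_ge_mult[OF padic_val_ge_p_power
        padic_val_ge_inverse_of_nat[of "k + 1"]] by simp
  moreover have "multiplicity p (k + 1) \<le> k"
    using multiplicity_Suc_le[of p 0 0 k] prime_ge_2_nat[OF prime] by simp
  ultimately show ?thesis by (auto intro: padic_val_ge_mono)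
qed

lemma padic_val_ge_p_times_bernoulli: "padic_val_ge p (of_nat p * bernoulli_num m) 0"
proof (induction m rule: less_induct)
  case (less m)
  have "padic_val_ge p (\<Sum>a<p. of_nat a ^ m) 0"
    by (intro padic_val_ge_sum) (metis padic_val_ge_of_nat of_nat_power)
  moreover have "padic_val_ge p (\<Sum>i<m. of_nat (m choose i) * (of_nat p * bernoulli_num i)
                   * (of_nat p ^ (m - i) / of_nat (m - i + 1))) 0"
  proof (intro padic_val_ge_sum)
    fix i assume "i \<in> {..<m}"
    then show "padic_val_ge p (of_nat (m choose i) * (of_nat p * bernoulli_num i)
        * (of_nat p ^ (m - i) / of_nat (m - i + 1))) 0"
      using padic_val_ge_mult[OF padic_val_ge_mult[OF padic_val_ge_of_nat less[of i]]
          padic_val_ge_p_power_div_Suc[of "m - i"]] by (simp only: add_0 lessThan_iff)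
  qed
  ultimately show ?case
    by (subst bernoulli_recurrence) (rule padic_val_ge_diff)
qed

lemma padic_val_ge_bernoulli: "padic_val_ge p (bernoulli_num m) (-1)"
proof -
  have "(of_nat p * bernoulli_num m) * of_nat p powi (-1) = bernoulli_num m"
    using prime by (simp add: power_int_minus prime_gt_0_nat)
  moreover have "padic_val_ge p ((of_nat p * bernoulli_num m) * of_nat p powi (-1)) (0 + -1)"
    by (intro padic_val_ge_mult padic_val_ge_p_times_bernoulli padic_val_ge_p_powi)
  ultimately show ?thesis by (simp only: add_0)
qed

lemma padic_val_ge_div_p: "padic_val_ge p (of_nat a / of_nat p) (-1)"
proof -
  have "(of_nat a / of_nat p :: rat) = of_nat a * of_nat p powi (-1)"
    by (simp add: power_int_minus divide_inverse)
  then show ?thesis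
    using padic_val_ge_mult[OF padic_val_ge_of_nat padic_val_ge_p_powi, of a "-1"]
    by simp
qed

lemma in_C_dagger_if_padic_val_ge:
  assumes "\<And>k. padic_val_ge p (a k) (c + int k)"
  shows "in_C_dagger p a"
proof -
  define \<rho> where "\<rho> = (1 + real p) / 2"
  have p: "real p \<ge> 2" using prime_ge_2_nat[OF prime] by linarith
  then have "\<rho> > 1" "0 \<le> \<rho> / real p" "\<rho> / real p < 1" by (simp_all add: \<rho>_def)
  have bound: "norm (padic_abs p (a k) * \<rho> ^ k) \<le> real p powi (- c) * (\<rho> / real p) ^ k" for k
  proof -
    have "padic_abs p (a k) \<le> real p powi (- (c + int k))"
      by (rule padic_abs_le[OF assms])
    also have "\<dots> = real p powi (- c) * real p powi (- int k)"
      using p by (simp add: power_int_add[symmetric])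
    also have "real p powi (- int k) = (1 / real p) ^ k"
      by (simp only: power_int_minus_divide power_int_of_nat power_one_over)
    finally have "padic_abs p (a k) \<le> real p powi (- c) * (1 / real p) ^ k" .
    then have "padic_abs p (a k) * \<rho> ^ k \<le> real p powi (- c) * (1 / real p) ^ k * \<rho> ^ k"
      using \<open>\<rho> > 1\<close> by (intro mult_right_mono) simp_all
    moreover have "padic_abs p (a k) \<ge> 0" using p by (simp add: padic_abs_def)
    ultimately show ?thesis using \<open>\<rho> > 1\<close> by (simp add: power_divide)
  qed
  have lim: "(\<lambda>k. real p powi (- c) * (\<rho> / real p) ^ k) \<longlonglongrightarrow> 0"
    using \<open>0 \<le> \<rho> / real p\<close> \<open>\<rho> / real p < 1\<close>
    by (intro tendsto_mult_right_zero LIMSEQ_power_zero) simp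
  have "(\<lambda>k. padic_abs p (a k) * \<rho> ^ k) \<longlonglongrightarrow> 0"
    using bound by (intro Lim_null_comparison[OF _ lim] always_eventually allI)
  with \<open>\<rho> > 1\<close> show ?thesis unfolding in_C_dagger_def by blast
qed

lemma padic_lim_val_ge_L1_partial:
  assumes "n + 1 < p ^ (L + 1)" "\<And>k. padic_val_ge p (a k) (c + int (k - n))"
  shows "padic_lim_val_ge p (L1_partial a) (c - 1 - int L)"
proof -
  have "padic_val_ge p (a k * bernoulli_num (k + 1) / of_nat (k + 1)) (c - 1 - int L)" for k
  proof -
    have "padic_val_ge p (a k * bernoulli_num (k + 1) * (1 / of_nat (k + 1)))
        (c + int (k - n) + -1 + - int (multiplicity p (k + 1)))"
      by (intro padic_val_ge_mult assms(2) padic_val_ge_bernoulli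
          padic_val_ge_inverse_of_nat) simp
    moreover have "multiplicity p (k + 1) \<le> L + (k - n)"
      using multiplicity_Suc_le[OF prime_ge_2_nat[OF prime] assms(1)] .
    ultimately show ?thesis by (auto intro: padic_val_ge_mono)
  qed
  then have "padic_val_ge p (L1_partial a N) (c - 1 - int L)" for N
    unfolding L1_partial_def by (intro padic_val_ge_sum)
  then show ?thesis
    unfolding padic_lim_val_ge_def using padic_val_rat_ge by blast
qed

end

section \<open>Valuation bounds for power series coefficients\<close>

definition fps_val_ge :: "nat \<Rightarrow> int \<Rightarrow> int \<Rightarrow> rat fps \<Rightarrow> bool" where
  "fps_val_ge p a r f \<longleftrightarrow> (\<forall>k. padic_val_ge p (f $ k) (a + r * int k))"

definition fps_linear_inverse :: "'a::field \<Rightarrow> 'a fps" where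
  "fps_linear_inverse c = Abs_fps (\<lambda>k. (-1) ^ k / c ^ (k + 1))"

lemma fps_linear_inverse:
  assumes "c \<noteq> 0"
  shows "fps_of_poly [:c, 1:] * fps_linear_inverse c = 1"
proof (rule fps_ext)
  fix k
  show "(fps_of_poly [:c, 1:] * fps_linear_inverse c) $ k = 1 $ k"
  proof (cases k)
    case (Suc k')
    then have "(fps_of_poly [:c, 1:] * fps_linear_inverse c) $ k
        = fps_linear_inverse c $ k' + c * fps_linear_inverse c $ k"
      by (simp add: fps_of_poly_linear algebra_simps)
    also have "\<dots> = 0" using Suc assms by (simp add: fps_linear_inverse_def field_simps)
    finally show ?thesis using Suc by simp
  qed (use assms in \<open>simp add: fps_of_poly_linear fps_linear_inverse_def\<close>)
qed

context
  fixes p :: nat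
  assumes prime: "prime p"
begin

lemma fps_val_ge_mult:
  assumes "fps_val_ge p a r f" "fps_val_ge p b r g"
  shows "fps_val_ge p (a + b) r (f * g)"
  unfolding fps_val_ge_def fps_mult_nth
proof (intro allI padic_val_ge_sum[OF prime])
  fix k i :: nat assume "i \<in> {0..k}"
  then have "(a + r * int i) + (b + r * int (k - i)) = a + b + r * int k"
    by (simp add: of_nat_diff algebra_simps)
  then show "padic_val_ge p (f $ i * g $ (k - i)) (a + b + r * int k)"
    using assms prime unfolding fps_val_ge_def by (metis padic_val_ge_mult)
qed

lemma fps_val_ge_const:
  "padic_val_ge p x a \<Longrightarrow> fps_val_ge p a r (fps_const x)"
  unfolding fps_val_ge_def using padic_val_ge_0[OF prime] by auto

lemma fps_val_ge_prod:
  "finite A \<Longrightarrow> (\<And>i. i \<in> A \<Longrightarrow> fps_val_ge p (a i) r (f i)) \<Longrightarrow>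
     fps_val_ge p (\<Sum>i\<in>A. a i) r (\<Prod>i\<in>A. f i)"
proof (induction A rule: finite_induct)
  case empty
  show ?case
    using fps_val_ge_const[of 1 0 r] padic_val_ge_of_nat[OF prime, of 1] by simp
qed (simp add: fps_val_ge_mult)

lemma fps_val_ge_power:
  "fps_val_ge p a r f \<Longrightarrow> fps_val_ge p (int e * a) r (f ^ e)"
  using fps_val_ge_prod[of "{..<e}" "\<lambda>_. a" r "\<lambda>_. f"] by simp

lemma fps_val_ge_linear:
  assumes "padic_val_ge p c a" "a + r \<le> 0"
  shows "fps_val_ge p a r (fps_of_poly [:c, 1:])"
  unfolding fps_val_ge_def
proof
  fix k :: nat
  consider "k = 0" | "k = 1" | "k \<ge> 2" by linarith
  then show "padic_val_ge p (fps_of_poly [:c, 1:] $ k) (a + r * int k)"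
  proof cases
    case 2
    then show ?thesis
      using padic_val_ge_mono[OF prime padic_val_ge_of_nat[OF prime, of 1] assms(2)] by simp
  qed (use assms(1) padic_val_ge_0[OF prime] in \<open>auto simp: fps_of_poly_linear\<close>)
qed

lemma fps_val_ge_linear_inverse:
  assumes "padic_val_ge p (1 / c) b" "r \<le> b"
  shows "fps_val_ge p b r (fps_linear_inverse c)"
  unfolding fps_val_ge_def
proof
  fix k
  have "padic_val_ge p (of_int ((-1) ^ k) * (1 / c) ^ (k + 1)) (0 + int (k + 1) * b)"
    by (intro padic_val_ge_mult[OF prime] padic_val_ge_of_int[OF prime]
        padic_val_ge_power[OF prime] assms(1))
  moreover have "b + r * int k \<le> 0 + int (k + 1) * b"
    using mult_right_mono[OF assms(2), of "int k"] by (simp add: algebra_simps)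
  ultimately show "padic_val_ge p (fps_linear_inverse c $ k) (b + r * int k)"
    unfolding fps_linear_inverse_def by (auto simp: power_one_over intro: padic_val_ge_mono[OF prime])
qed

end

section \<open>The Taylor expansion of R_n(t + j/p)\<close>

lemma pcompose_power_left: "(f ^ e) \<circ>\<^sub>p q = (f \<circ>\<^sub>p q) ^ e"
  by (induction e) (simp_all add: pcompose_mult pcompose_1)

lemma pcompose_pochhammer_linear:
  "pochhammer [:a, 1:] n \<circ>\<^sub>p [:c, 1:] = (\<Prod>i<n. [:c + a + of_nat i, 1 :: 'a :: comm_ring_1:])"
proof -
  have "([:a, 1:] + of_nat i) \<circ>\<^sub>p [:c, 1:] = [:c + a + of_nat i, 1 :: 'a:]" for i
    by (simp add: pcompose_pCons of_nat_poly algebra_simps)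
  then show ?thesis
    by (simp add: pochhammer_prod atLeast0LessThan pcompose_prod)
qed

definition Rn_shift_numerator :: "nat \<Rightarrow> nat \<Rightarrow> nat \<Rightarrow> rat \<Rightarrow> rat fps" where
  "Rn_shift_numerator p s n c = fps_const (of_nat p ^ (p * n) * fact n ^ s) *
     (fps_of_poly [:c, 1:] ^ M0 p s *
      (\<Prod>j'\<in>{1..p-1}. \<Prod>i<n. fps_of_poly [:c + of_nat j' / of_nat p + of_nat i, 1:]))"

definition Rn_shift_denominator_inverse :: "nat \<Rightarrow> nat \<Rightarrow> nat \<Rightarrow> rat \<Rightarrow> rat fps" where
  "Rn_shift_denominator_inverse p s n c = (\<Prod>m<n+1. fps_linear_inverse (c + of_nat m)) ^ (p - 1 + s)"

lemma fps_of_poly_Rn_num_pcompose: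
  "fps_of_poly (Rn_num p s n \<circ>\<^sub>p [:c, 1:]) = Rn_shift_numerator p s n c"
proof -
  have "monom 1 (M0 p s) \<circ>\<^sub>p [:c, 1:] = [:c, 1 :: rat:] ^ M0 p s"
    by (simp add: monom_altdef pcompose_pCons pcompose_power_left)
  then show ?thesis
    unfolding Rn_num_def Rn_shift_numerator_def
    by (simp add: pcompose_smult pcompose_mult pcompose_prod pcompose_pochhammer_linear
        fps_of_poly_smult fps_of_poly_mult fps_of_poly_power fps_of_poly_prod)
qed

lemma fps_of_poly_Rn_den_pcompose_mult_inverse:
  assumes "c > 0"
  shows "fps_of_poly (Rn_den p s n \<circ>\<^sub>p [:c, 1:]) * Rn_shift_denominator_inverse p s n c = 1"
proof -
  have inv: "fps_of_poly [:c + of_nat m, 1:] * fps_linear_inverse (c + of_nat m) = 1" for m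
    using assms by (intro fps_linear_inverse) (metis add_pos_nonneg of_nat_0_le_iff less_irrefl)
  have "fps_of_poly (Rn_den p s n \<circ>\<^sub>p [:c, 1:]) = (\<Prod>m<n+1. fps_of_poly [:c + of_nat m, 1:]) ^ (p - 1 + s)"
    unfolding Rn_den_def
    by (simp only: pcompose_power_left pcompose_pochhammer_linear fps_of_poly_power fps_of_poly_prod
        add_0_right)
  then show ?thesis
    unfolding Rn_shift_denominator_inverse_def
    by (simp only: power_mult_distrib[symmetric] prod.distrib[symmetric] inv prod.neutral_const power_one)
qed

lemma Rn_shift_coeffs_eq:
  assumes "j > 0" "p > 0"
  shows "Rn_shift_coeffs p s n j k =
    (Rn_shift_numerator p s n (of_nat j / of_nat p) * Rn_shift_denominator_inverse p s n (of_nat j / of_nat p)) $ k"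
proof -
  define c :: rat where "c = of_nat j / of_nat p"
  define D where "D = fps_of_poly (Rn_den p s n \<circ>\<^sub>p [:c, 1:])"
  define N H where "N = Rn_shift_numerator p s n c" and "H = Rn_shift_denominator_inverse p s n c"
  have "c > 0" using assms by (simp add: c_def)
  then have DH: "D * H = 1"
    unfolding D_def H_def by (rule fps_of_poly_Rn_den_pcompose_mult_inverse)
  then have "D \<noteq> 0" by auto
  have "N / D = N * H * D / D" using DH by (simp add: mult.assoc mult.commute[of H])
  also have "\<dots> = N * H" using \<open>D \<noteq> 0\<close> by simp
  finally show ?thesis
    unfolding Rn_shift_coeffs_def fps_of_poly_Rn_num_pcompose N_def H_def D_def c_def by simp
qed

context
  fixes p :: nat
  assumes prime: "prime p"
begin

lemma fps_val_ge_Rn_shift_numerator_product: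
  assumes "j \<in> {1..p-1}" "0 \<le> r" "r \<le> 1"
  shows "fps_val_ge p (- int n * (int p - 2 + r)) r
    (\<Prod>j'\<in>{1..p-1}. \<Prod>i<n. fps_of_poly [:of_nat j / of_nat p + of_nat j' / of_nat p + of_nat i, 1:])"
proof -
  define Q where "Q j' = (\<Prod>i<n. fps_of_poly [:of_nat j / of_nat p + of_nat j' / of_nat p + of_nat i, 1 :: rat:])"
    for j'
  have p: "(of_nat p :: rat) \<noteq> 0" using prime by (simp add: prime_gt_0_nat)
  have mem: "p - j \<in> {1..p-1}" using assms(1) by auto
  have "fps_val_ge p (\<Sum>i<n. - r) r (Q (p - j))"
    unfolding Q_def
  proof (intro fps_val_ge_prod[OF prime] finite_lessThan fps_val_ge_linear[OF prime])
    fix i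
    have "of_nat j / of_nat p + of_nat (p - j) / of_nat p + of_nat i = (of_nat (i + 1) :: rat)"
    proof -
      have "j \<le> p" using assms(1) by auto
      then show ?thesis using p by (simp add: of_nat_diff field_simps)
    qed
    then show "padic_val_ge p (of_nat j / of_nat p + of_nat (p - j) / of_nat p + of_nat i) (- r)"
      using padic_val_ge_mono[OF prime padic_val_ge_of_nat[OF prime, of "i + 1"], of "- r"] assms(2)
      by simp
  qed simp
  then have A: "fps_val_ge p (- int n * r) r (Q (p - j))" by simp
  have "fps_val_ge p (\<Sum>j'\<in>{1..p-1} - {p - j}. \<Sum>i<n. - 1) r (\<Prod>j'\<in>{1..p-1} - {p - j}. Q j')"
    unfolding Q_def
  proof (intro fps_val_ge_prod[OF prime] finite_lessThan finite_Diff finite_atLeastAtMost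
      fps_val_ge_linear[OF prime])
    fix j' i
    have "of_nat j / of_nat p + of_nat j' / of_nat p + of_nat i = (of_nat (j + j' + i * p) / of_nat p :: rat)"
      using p by (simp add: field_simps)
    then show "padic_val_ge p (of_nat j / of_nat p + of_nat j' / of_nat p + of_nat i) (- 1)"
      using padic_val_ge_div_p[OF prime, of "j + j' + i * p"] by simp
  qed (use assms(3) in simp)
  then have "fps_val_ge p (- (int (card ({1..p-1} - {p - j})) * int n)) r
      (\<Prod>j'\<in>{1..p-1} - {p - j}. Q j')"
    by simp
  moreover have "int (card ({1..p-1} - {p - j})) = int p - 2"
    using mem prime_ge_2_nat[OF prime] by (simp add: of_nat_diff)
  ultimately have B: "fps_val_ge p (- ((int p - 2) * int n)) r (\<Prod>j'\<in>{1..p-1} - {p - j}. Q j')"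
    by (simp only:)
  have "- int n * r + - ((int p - 2) * int n) = - int n * (int p - 2 + r)"
    by (simp add: algebra_simps)
  then show ?thesis
    using fps_val_ge_mult[OF prime A B]
    unfolding Q_def[symmetric] prod.remove[OF finite_atLeastAtMost mem] by simp
qed

lemma fps_val_ge_Rn_shift_numerator:
  assumes "j \<in> {1..p-1}" "0 \<le> r" "r \<le> 1"
  shows "fps_val_ge p (int (p * n) + int s * int (multiplicity p (fact n)) - int (M0 p s)
      - int n * (int p - 2 + r)) r (Rn_shift_numerator p s n (of_nat j / of_nat p))"
proof -
  have "padic_val_ge p (of_nat p ^ (p * n) * fact n ^ s)
      (int (p * n) + int s * int (multiplicity p (fact n)))"
    using padic_val_ge_mult[OF prime padic_val_ge_p_power[OF prime, of "p * n"]
        padic_val_ge_power[OF prime padic_val_ge_of_nat_multiplicity[OF prime, of "fact n"], of s]]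
    by simp
  then have "fps_val_ge p (int (p * n) + int s * int (multiplicity p (fact n))) r
      (fps_const (of_nat p ^ (p * n) * fact n ^ s))"
    by (rule fps_val_ge_const[OF prime])
  moreover have "fps_val_ge p (int (M0 p s) * -1) r (fps_of_poly [:of_nat j / of_nat p, 1:] ^ M0 p s)"
    using assms(3) by (intro fps_val_ge_power[OF prime] fps_val_ge_linear[OF prime] padic_val_ge_div_p[OF prime]) simp
  ultimately have "fps_val_ge p (int (p * n) + int s * int (multiplicity p (fact n))
      + (int (M0 p s) * -1 + - int n * (int p - 2 + r))) r (Rn_shift_numerator p s n (of_nat j / of_nat p))"
    unfolding Rn_shift_numerator_def
    by (intro fps_val_ge_mult[OF prime] fps_val_ge_Rn_shift_numerator_product[OF assms])
  then show ?thesis by (simp add: algebra_simps)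
qed

lemma fps_val_ge_Rn_shift_denominator_inverse:
  assumes "j \<in> {1..p-1}" "r \<le> 1"
  shows "fps_val_ge p (int ((p - 1 + s) * (n + 1))) r
    (Rn_shift_denominator_inverse p s n (of_nat j / of_nat p))"
proof -
  have "fps_val_ge p (\<Sum>m<n+1. 1) r (\<Prod>m<n+1. fps_linear_inverse (of_nat j / of_nat p + of_nat m))"
  proof (intro fps_val_ge_prod[OF prime] finite_lessThan fps_val_ge_linear_inverse[OF prime] assms(2))
    fix m
    have "\<not> int p dvd int (j + m * p)"
      using assms(1) by (auto simp: dvd_add_left_iff dest: dvd_imp_le)
    moreover have "1 / (of_nat j / of_nat p + of_nat m) = 1 / of_int (int (j + m * p)) * (of_nat p :: rat) powi 1"
      using assms(1) prime by (simp add: field_simps prime_gt_0_nat)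
    ultimately show "padic_val_ge p (1 / (of_nat j / of_nat p + of_nat m)) 1"
      using padic_val_ge_mult[OF prime padic_val_ge_inverse_coprime[OF prime] padic_val_ge_p_powi[OF prime],
          of "int (j + m * p)" 1]
      by simp
  qed
  from fps_val_ge_power[OF prime this, of "p - 1 + s"]
  have "fps_val_ge p (int (p - 1 + s) * int (n + 1)) r
      ((\<Prod>m<n+1. fps_linear_inverse (of_nat j / of_nat p + of_nat m)) ^ (p - 1 + s))"
    by (simp only: sum_constant card_lessThan) simp
  then show ?thesis
    unfolding Rn_shift_denominator_inverse_def of_nat_mult .
qed

lemma padic_val_ge_Rn_shift_coeffs:
  assumes "j \<in> {1..p-1}"
  shows "padic_val_ge p (Rn_shift_coeffs p s n j k) (int ((p + 1 + s) * (n + 1))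
    + int s * int (multiplicity p (fact n)) - int (M0 p s) - 2 + int (k - n))"
proof -
  define G where "G = int ((p + 1 + s) * (n + 1)) + int s * int (multiplicity p (fact n)) - int (M0 p s) - 2"
  define F where "F = Rn_shift_numerator p s n (of_nat j / of_nat p)
    * Rn_shift_denominator_inverse p s n (of_nat j / of_nat p)"
  have bound: "padic_val_ge p (F $ k) (G - r * int n + r * int k)" if "0 \<le> r" "r \<le> 1" for r
  proof -
    have "int (p - 1 + s) = int p - 1 + int s" using prime_ge_2_nat[OF prime] by auto
    then have "int (p * n) + int s * int (multiplicity p (fact n)) - int (M0 p s) - int n * (int p - 2 + r)
        + int ((p - 1 + s) * (n + 1)) = G - r * int n"
      unfolding G_def of_nat_mult by (simp add: algebra_simps)
    moreover have "fps_val_ge p (int (p * n) + int s * int (multiplicity p (fact n)) - int (M0 p s)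
        - int n * (int p - 2 + r) + int ((p - 1 + s) * (n + 1))) r F"
      unfolding F_def
      by (intro fps_val_ge_mult[OF prime] fps_val_ge_Rn_shift_numerator assms that
          fps_val_ge_Rn_shift_denominator_inverse)
    ultimately show ?thesis unfolding fps_val_ge_def by simp
  qed
  have "j > 0" "p > 0" using assms prime_gt_0_nat[OF prime] by auto
  then have "Rn_shift_coeffs p s n j k = F $ k"
    unfolding F_def by (rule Rn_shift_coeffs_eq)
  moreover have "padic_val_ge p (F $ k) (G + int (k - n))"
  proof (cases "k \<le> n")
    case True
    then show ?thesis using bound[of 0] by simp
  next
    case False
    have "padic_val_ge p (F $ k) (G - 1 * int n + 1 * int k)" by (rule bound) simp_all
    moreover have "G - 1 * int n + 1 * int k = G + int (k - n)" using False by simp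
    ultimately show ?thesis by (simp only:)
  qed
  ultimately show ?thesis unfolding G_def by simp
qed

end

theorem lemma6p1:
  fixes p s n j :: nat
  assumes "prime p" and "p \<ge> 5" and "s \<ge> 1"
    and "n > (p + s) ^ 4"
    and "j \<in> {1..p-1}"
  shows "in_C_dagger p (Rn_shift_coeffs p s n j)
    \<and> padic_lim_val_ge p (L1_partial (Rn_shift_coeffs p s n j))
        (int ((p + 1 + s) * (n + 1)) + int s * int (multiplicity p (fact n))
         - int (M0 p s) - 3 - \<lfloor>ln (real (n + 1)) / ln (real p)\<rfloor>)"
proof
  define G where "G = int ((p + 1 + s) * (n + 1)) + int s * int (multiplicity p (fact n)) - int (M0 p s) - 2"
  have coeffs: "padic_val_ge p (Rn_shift_coeffs p s n j k) (G + int (k - n))" for k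
    unfolding G_def using padic_val_ge_Rn_shift_coeffs[OF assms(1,5)] by simp
  have "padic_val_ge p (Rn_shift_coeffs p s n j k) ((G - int n) + int k)" for k
    using padic_val_ge_mono[OF assms(1) coeffs] by simp
  then show "in_C_dagger p (Rn_shift_coeffs p s n j)"
    by (rule in_C_dagger_if_padic_val_ge[OF assms(1)])
  obtain L where "\<lfloor>log (real p) (real (n + 1))\<rfloor> = int L" "n + 1 < p ^ (L + 1)"
    using floor_log_Suc_bound prime_ge_2_nat[OF assms(1)] by blast
  with padic_lim_val_ge_L1_partial[OF assms(1) _ coeffs]
  show "padic_lim_val_ge p (L1_partial (Rn_shift_coeffs p s n j))
      (int ((p + 1 + s) * (n + 1)) + int s * int (multiplicity p (fact n))
       - int (M0 p s) - 3 - \<lfloor>ln (real (n + 1)) / ln (real p)\<rfloor>)"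
    unfolding G_def log_def by (simp add: algebra_simps)
qed

end
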